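(* Let $(V,\le,\preccurlyeq)$ be a mixed lattice vector space whose cone $V_{sp}$ is generating ($V=V_{sp}-V_{sp}$), equipped with a vector topology $\tau$. The following are equivalent: (a) $\tau$ is locally mixed-full and the mixed lattice operations are continuous at zero; (b) for every neighborhood $U$ of zero there exists a neighborhood $W$ of zero with $W\subseteq U$ and $MS_1(W)\subseteq U$; (c) for every neighborhood $U$ of zero there exists a neighborhood $W$ of zero with $W\subseteq U$ and $MS_2(W)\subseteq U$.
   Context: A mixed lattice vector space $(V,\le,\preccurlyeq)$ is a real vector space $V$ with two partial orderings $\le$ (initial order) and $\preccurlyeq$ (specific order), each making $V$ a partially ordered vector space, with positive cones $V_p=\{x:0\le x\}$, $V_{sp}=\{x:0\preccurlyeq x\}$, such that: (1) for all $x,y$ the elements $x\curlyvee y=\min\{w: w\succcurlyeq x,\ w\ge y\}$ and $x\curlywedge y=\max\{w: w\preccurlyeq x,\ w\le y\}$ exist (min/max with respect to $\le$); (2) $x\preccurlyeq y$ implies $x\le y$; (3) $x\curlyvee y, x\curlywedge y\in V_{sp}$ whenever $x,y\in V_{sp}$. The mixed lattice operations are $(x,y)\mapsto x\curlyvee y$, $(x,y)\mapsto x\curlywedge y$; "continuous at zero" means continuous at $(0,0)$. Notation: $x^u=0\curlyvee x$, $x^l=0\curlyvee(-x)$, $s(x)=x^u+x^l$; $MS_1(A)=\{y: -s(x)\preccurlyeq y\le s(x)\text{ for some }x\in A\}$, $MS_2(A)=\{y: -s(x)\le y\preccurlyeq s(x)\text{ for some }x\in A\}$. $\tau$ is locally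 mixed-full if every neighborhood of zero contains a neighborhood $W$ of zero such that $y\in W$ and $0\preccurlyeq x\le y$ imply $x\in W$. *)

theory Defs
  imports "HOL-Analysis.Analysis"
begin

definition ordered_vs :: "('a::real_vector \<Rightarrow> 'a \<Rightarrow> bool) \<Rightarrow> bool" where
  "ordered_vs le \<longleftrightarrow>
     (\<forall>x. le x x) \<and>
     (\<forall>x y. le x y \<and> le y x \<longrightarrow> x = y) \<and>
     (\<forall>x y z. le x y \<and> le y z \<longrightarrow> le x z) \<and>
     (\<forall>x y z. le x y \<longrightarrow> le (x + z) (y + z)) \<and>
     (\<forall>x y (c::real). le x y \<and> 0 \<le> c \<longrightarrow> le (c *\<^sub>R x) (c *\<^sub>R y))"

definition is_least_wrt :: "('a \<Rightarrow> 'a \<Rightarrow> bool) \<Rightarrow> 'a set \<Rightarrow> 'a \<Rightarrow> bool" where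
  "is_least_wrt le S w \<longleftrightarrow> w \<in> S \<and> (\<forall>z\<in>S. le w z)"

definition is_greatest_wrt :: "('a \<Rightarrow> 'a \<Rightarrow> bool) \<Rightarrow> 'a set \<Rightarrow> 'a \<Rightarrow> bool" where
  "is_greatest_wrt le S w \<longleftrightarrow> w \<in> S \<and> (\<forall>z\<in>S. le z w)"

definition mup :: "('a \<Rightarrow> 'a \<Rightarrow> bool) \<Rightarrow> ('a \<Rightarrow> 'a \<Rightarrow> bool) \<Rightarrow> 'a \<Rightarrow> 'a \<Rightarrow> 'a" where
  "mup le sle x y = (THE w. is_least_wrt le {w. sle x w \<and> le y w} w)"

definition mlow :: "('a \<Rightarrow> 'a \<Rightarrow> bool) \<Rightarrow> ('a \<Rightarrow> 'a \<Rightarrow> bool) \<Rightarrow> 'a \<Rightarrow> 'a \<Rightarrow> 'a" where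
  "mlow le sle x y = (THE w. is_greatest_wrt le {w. sle w x \<and> le w y} w)"

definition mixed_lattice_vs :: "('a::real_vector \<Rightarrow> 'a \<Rightarrow> bool) \<Rightarrow> ('a \<Rightarrow> 'a \<Rightarrow> bool) \<Rightarrow> bool" where
  "mixed_lattice_vs le sle \<longleftrightarrow>
     ordered_vs le \<and> ordered_vs sle \<and>
     (\<forall>x y. \<exists>w. is_least_wrt le {w. sle x w \<and> le y w} w) \<and>
     (\<forall>x y. \<exists>w. is_greatest_wrt le {w. sle w x \<and> le w y} w) \<and>
     (\<forall>x y. sle x y \<longrightarrow> le x y) \<and>
     (\<forall>x y. sle 0 x \<and> sle 0 y \<longrightarrow> sle 0 (mup le sle x y) \<and> sle 0 (mlow le sle x y))"

definition generating_sp :: "('a::real_vector \<Rightarrow> 'a \<Rightarrow> bool) \<Rightarrow> bool" where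
  "generating_sp sle \<longleftrightarrow> (\<forall>v. \<exists>a b. sle 0 a \<and> sle 0 b \<and> v = a - b)"

definition vector_topology :: "'a::real_vector topology \<Rightarrow> bool" where
  "vector_topology T \<longleftrightarrow>
     topspace T = UNIV \<and>
     continuous_map (prod_topology T T) T (\<lambda>(x, y). x + y) \<and>
     continuous_map (prod_topology euclideanreal T) T (\<lambda>(c, x). c *\<^sub>R x)"

definition nhd0 :: "'a::zero topology \<Rightarrow> 'a set \<Rightarrow> bool" where
  "nhd0 T U \<longleftrightarrow> (\<exists>G. openin T G \<and> 0 \<in> G \<and> G \<subseteq> U)"

definition continuous_at_pt :: "'a topology \<Rightarrow> 'b topology \<Rightarrow> ('a \<Rightarrow> 'b) \<Rightarrow> 'a \<Rightarrow> bool" where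
  "continuous_at_pt S T f a \<longleftrightarrow>
     (\<forall>U. openin T U \<and> f a \<in> U \<longrightarrow> (\<exists>N. openin S N \<and> a \<in> N \<and> f ` N \<subseteq> U))"

definition locally_mixed_full :: "('a::real_vector \<Rightarrow> 'a \<Rightarrow> bool) \<Rightarrow> ('a \<Rightarrow> 'a \<Rightarrow> bool) \<Rightarrow> 'a topology \<Rightarrow> bool" where
  "locally_mixed_full le sle T \<longleftrightarrow>
     (\<forall>U. nhd0 T U \<longrightarrow> (\<exists>W. nhd0 T W \<and> W \<subseteq> U \<and>
        (\<forall>x y. y \<in> W \<and> sle 0 x \<and> le x y \<longrightarrow> x \<in> W)))"

definition mixed_ops_cont_zero :: "('a::real_vector \<Rightarrow> 'a \<Rightarrow> bool) \<Rightarrow> ('a \<Rightarrow> 'a \<Rightarrow> bool) \<Rightarrow> 'a topology \<Rightarrow> bool" where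
  "mixed_ops_cont_zero le sle T \<longleftrightarrow>
     continuous_at_pt (prod_topology T T) T (\<lambda>(x, y). mup le sle x y) (0, 0) \<and>
     continuous_at_pt (prod_topology T T) T (\<lambda>(x, y). mlow le sle x y) (0, 0)"

definition mabs :: "('a::real_vector \<Rightarrow> 'a \<Rightarrow> bool) \<Rightarrow> ('a \<Rightarrow> 'a \<Rightarrow> bool) \<Rightarrow> 'a \<Rightarrow> 'a" where
  "mabs le sle x = mup le sle 0 x + mup le sle 0 (- x)"

definition MS1 :: "('a::real_vector \<Rightarrow> 'a \<Rightarrow> bool) \<Rightarrow> ('a \<Rightarrow> 'a \<Rightarrow> bool) \<Rightarrow> 'a set \<Rightarrow> 'a set" where
  "MS1 le sle A = {y. \<exists>x\<in>A. sle (- mabs le sle x) y \<and> le y (mabs le sle x)}"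

definition MS2 :: "('a::real_vector \<Rightarrow> 'a \<Rightarrow> bool) \<Rightarrow> ('a \<Rightarrow> 'a \<Rightarrow> bool) \<Rightarrow> 'a set \<Rightarrow> 'a set" where
  "MS2 le sle A = {y. \<exists>x\<in>A. le (- mabs le sle x) y \<and> sle y (mabs le sle x)}"

end

theory Submission
  imports Defs
begin

(* Everything is governed by the mixed absolute value s(x) = x^u + x^l.  If y lies in
   MS_1({x}), then 0 \<preccurlyeq> y + s(x) \<le> 2 s(x); so local mixed-fullness together with continuity
   of s at zero (a consequence of continuity of \<curlyvee> at (0,0)) pushes MS_1(W) into any given
   neighbourhood of zero.  Conversely, x \<curlyvee> y - x lies in MS_1({y - x}), x - x \<curlywedge> y lies in
   MS_1({x - y}), and every x with 0 \<preccurlyeq> x \<le> y lies in MS_1({y}); this yields continuity and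
   mixed-fullness from (b).  Finally MS_2(A) = -MS_1(A), and zero has a basis of symmetric
   neighbourhoods, so (b) and (c) are equivalent. *)

definition nhd0_image_small :: "'a::zero topology \<Rightarrow> ('a set \<Rightarrow> 'a set) \<Rightarrow> bool" where
  "nhd0_image_small T M \<longleftrightarrow> (\<forall>U. nhd0 T U \<longrightarrow> (\<exists>W. nhd0 T W \<and> W \<subseteq> U \<and> M W \<subseteq> U))"

section \<open>Neighbourhoods of zero in a vector topology\<close>

lemma nhd0_open: "openin T V \<Longrightarrow> 0 \<in> V \<Longrightarrow> nhd0 T V"
  unfolding nhd0_def by blast

lemma nhd0_mono: "nhd0 T W \<Longrightarrow> W \<subseteq> U \<Longrightarrow> nhd0 T U"
  unfolding nhd0_def by blast

lemma nhd0_Int: "nhd0 T U \<Longrightarrow> nhd0 T V \<Longrightarrow> nhd0 T (U \<inter> V)"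
  unfolding nhd0_def by (metis IntI Int_mono openin_Int)

lemma vector_topology_topspace: "vector_topology T \<Longrightarrow> topspace T = UNIV"
  unfolding vector_topology_def by simp

lemma vector_topology_scaleR_preimage:
  assumes T: "vector_topology T" and G: "openin T G"
  shows "openin T {x. c *\<^sub>R x \<in> G}"
proof -
  have "continuous_map (prod_topology euclideanreal T) T (\<lambda>(c, x). c *\<^sub>R x)"
    using T unfolding vector_topology_def by blast
  moreover have "continuous_map T (prod_topology euclideanreal T) (\<lambda>x. (c, x))"
    by (intro continuous_map_pairedI) auto
  ultimately have "continuous_map T T ((\<lambda>(c, x). c *\<^sub>R x) \<circ> (\<lambda>x. (c, x)))"
    by (intro continuous_map_compose)
  then have "continuous_map T T (\<lambda>x. c *\<^sub>R x)"
    by (simp add: o_def)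
  from openin_continuous_map_preimage[OF this G] show ?thesis
    by (simp add: vector_topology_topspace[OF T])
qed

lemma vector_topology_half_nhd0:
  assumes T: "vector_topology T" and U: "nhd0 T U"
  obtains V where "openin T V" "0 \<in> V" "\<And>a. a \<in> V \<Longrightarrow> - a \<in> V"
    "\<And>a b. a \<in> V \<Longrightarrow> b \<in> V \<Longrightarrow> a + b \<in> U" "V \<subseteq> U"
proof -
  obtain G where G: "openin T G" "0 \<in> G" "G \<subseteq> U"
    using U unfolding nhd0_def by blast
  have "continuous_map (prod_topology T T) T (\<lambda>(x, y). x + y)"
    using T unfolding vector_topology_def by blast
  from openin_continuous_map_preimage[OF this G(1)]
  have "openin (prod_topology T T) {p. (\<lambda>(x, y). x + y) p \<in> G}"
    by (simp add: vector_topology_topspace[OF T])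
  moreover have "(0, 0) \<in> {p. (\<lambda>(x, y). x + y) p \<in> G}"
    using G by simp
  ultimately obtain A B where AB: "openin T A" "openin T B" "0 \<in> A" "0 \<in> B"
    "A \<times> B \<subseteq> {p. (\<lambda>(x, y). x + y) p \<in> G}"
    unfolding openin_prod_topology_alt by metis
  define V where "V = (A \<inter> B) \<inter> {x. (- 1) *\<^sub>R x \<in> A \<inter> B}"
  have "openin T V"
    unfolding V_def using AB(1,2)
    by (intro openin_Int vector_topology_scaleR_preimage[OF T])
  moreover have "0 \<in> V" and "\<And>a. a \<in> V \<Longrightarrow> - a \<in> V"
    using AB(3,4) by (auto simp: V_def)
  moreover have sum: "a + b \<in> U" if "a \<in> V" "b \<in> V" for a b
  proof -
    have "(a, b) \<in> A \<times> B"
      using that by (simp add: V_def)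
    then show ?thesis
      using AB(5) G(3) by auto
  qed
  moreover have "V \<subseteq> U"
    using sum[of _ 0] \<open>0 \<in> V\<close> by fastforce
  ultimately show thesis
    by (rule that)
qed

lemma continuous_at_pt_prod_zero_iff:
  assumes f0: "f 0 0 = 0"
  shows "continuous_at_pt (prod_topology T T) T (\<lambda>(x, y). f x y) (0, 0) \<longleftrightarrow>
    (\<forall>U. openin T U \<and> 0 \<in> U \<longrightarrow> (\<exists>V. openin T V \<and> 0 \<in> V \<and> (\<forall>x\<in>V. \<forall>y\<in>V. f x y \<in> U)))"
    (is "?cont \<longleftrightarrow> ?small")
proof
  assume ?cont
  show ?small
  proof (intro allI impI)
    fix U assume "openin T U \<and> 0 \<in> U"
    then obtain N where N: "openin (prod_topology T T) N" "(0, 0) \<in> N"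
      "(\<lambda>(x, y). f x y) ` N \<subseteq> U"
      using \<open>?cont\<close> f0 unfolding continuous_at_pt_def by auto
    then obtain A B where AB: "openin T A" "openin T B" "0 \<in> A" "0 \<in> B" "A \<times> B \<subseteq> N"
      unfolding openin_prod_topology_alt by metis
    have "\<forall>x\<in>A \<inter> B. \<forall>y\<in>A \<inter> B. f x y \<in> U"
      using AB(5) N(3) by fastforce
    then show "\<exists>V. openin T V \<and> 0 \<in> V \<and> (\<forall>x\<in>V. \<forall>y\<in>V. f x y \<in> U)"
      using AB(1-4) by (metis IntI openin_Int)
  qed
next
  assume ?small
  show ?cont
    unfolding continuous_at_pt_def
  proof (intro allI impI)
    fix U assume "openin T U \<and> (\<lambda>(x, y). f x y) (0, 0) \<in> U"
    then obtain V where V: "openin T V" "0 \<in> V" "\<forall>x\<in>V. \<forall>y\<in>V. f x y \<in> U"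
      using \<open>?small\<close> f0 by auto
    have "openin (prod_topology T T) (V \<times> V)"
      using V(1) by (simp add: openin_prod_Times_iff)
    moreover have "(\<lambda>(x, y). f x y) ` (V \<times> V) \<subseteq> U"
      using V(3) by auto
    ultimately show "\<exists>N. openin (prod_topology T T) N \<and> (0, 0) \<in> N \<and> (\<lambda>(x, y). f x y) ` N \<subseteq> U"
      using V(2) by blast
  qed
qed

lemma nhd0_image_small_uminus:
  assumes T: "vector_topology T" and M': "\<And>W. M' W \<subseteq> uminus ` M W"
    and M: "nhd0_image_small T M"
  shows "nhd0_image_small T M'"
  unfolding nhd0_image_small_def
proof (intro allI impI)
  fix U assume "nhd0 T U"
  then obtain V where V: "openin T V" "0 \<in> V" "\<And>a. a \<in> V \<Longrightarrow> - a \<in> V" "V \<subseteq> U"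
    using vector_topology_half_nhd0[OF T] by metis
  then obtain W where W: "nhd0 T W" "W \<subseteq> V" "M W \<subseteq> V"
    using M nhd0_open unfolding nhd0_image_small_def by metis
  have "M' W \<subseteq> V"
    using M'[of W] W(3) V(3) by fastforce
  then show "\<exists>W. nhd0 T W \<and> W \<subseteq> U \<and> M' W \<subseteq> U"
    using W V(4) by blast
qed

section \<open>Mixed lattice vector spaces\<close>

lemma ordered_vs_refl: "ordered_vs r \<Longrightarrow> r x x"
  unfolding ordered_vs_def by blast

lemma ordered_vs_antisym: "ordered_vs r \<Longrightarrow> r x y \<Longrightarrow> r y x \<Longrightarrow> x = y"
  unfolding ordered_vs_def by blast

lemma ordered_vs_trans: "ordered_vs r \<Longrightarrow> r x y \<Longrightarrow> r y z \<Longrightarrow> r x z"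
  unfolding ordered_vs_def by blast

lemma ordered_vs_add_right: "ordered_vs r \<Longrightarrow> r x y \<Longrightarrow> r (x + z) (y + z)"
  unfolding ordered_vs_def by blast

lemma ordered_vs_add_left: "ordered_vs r \<Longrightarrow> r x y \<Longrightarrow> r (z + x) (z + y)"
  using ordered_vs_add_right[of r x y z] by (simp add: add.commute)

lemma ordered_vs_diff_nonneg_iff: "ordered_vs r \<Longrightarrow> r 0 (y - x) \<longleftrightarrow> r x y"
  using ordered_vs_add_right[of r 0 "y - x" x] ordered_vs_add_right[of r x y "- x"] by auto

lemma ordered_vs_uminus: "ordered_vs r \<Longrightarrow> r x y \<Longrightarrow> r (- y) (- x)"
  using ordered_vs_add_right[of r x y "- x - y"] by (simp add: algebra_simps)

lemma ordered_vs_add_nonneg: "ordered_vs r \<Longrightarrow> r 0 a \<Longrightarrow> r 0 b \<Longrightarrow> r 0 (a + b)"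
  using ordered_vs_add_right[of r 0 a b] ordered_vs_trans[of r 0 b "a + b"] by simp

lemma is_least_wrt_The:
  "ordered_vs le \<Longrightarrow> is_least_wrt le S w \<Longrightarrow> (THE w. is_least_wrt le S w) = w"
  unfolding is_least_wrt_def by (blast intro: the_equality ordered_vs_antisym)

lemma is_greatest_wrt_The:
  "ordered_vs le \<Longrightarrow> is_greatest_wrt le S w \<Longrightarrow> (THE w. is_greatest_wrt le S w) = w"
  unfolding is_greatest_wrt_def by (blast intro: the_equality ordered_vs_antisym)

lemma MS1_UN: "MS1 le sle W = (\<Union>x\<in>W. MS1 le sle {x})"
  unfolding MS1_def by auto

locale mixed_lattice =
  fixes le sle :: "'a::real_vector \<Rightarrow> 'a \<Rightarrow> bool"
  assumes mixed_lattice_vs: "mixed_lattice_vs le sle"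
begin

lemma le_ordered: "ordered_vs le"
  and sle_ordered: "ordered_vs sle"
  and sle_imp_le: "sle x y \<Longrightarrow> le x y"
  using mixed_lattice_vs unfolding mixed_lattice_vs_def by auto

lemmas le_ordered_trans [trans] = ordered_vs_trans[OF le_ordered]
lemmas sle_ordered_trans [trans] = ordered_vs_trans[OF sle_ordered]

lemma is_least_mup: "is_least_wrt le {w. sle x w \<and> le y w} (mup le sle x y)"
proof -
  obtain w where "is_least_wrt le {w. sle x w \<and> le y w} w"
    using mixed_lattice_vs unfolding mixed_lattice_vs_def by blast
  then show ?thesis
    unfolding mup_def using is_least_wrt_The[OF le_ordered] by simp
qed

lemma is_greatest_mlow: "is_greatest_wrt le {w. sle w x \<and> le w y} (mlow le sle x y)"
proof -
  obtain w where "is_greatest_wrt le {w. sle w x \<and> le w y} w"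
    using mixed_lattice_vs unfolding mixed_lattice_vs_def by blast
  then show ?thesis
    unfolding mlow_def using is_greatest_wrt_The[OF le_ordered] by simp
qed

lemma sle_mup: "sle x (mup le sle x y)"
  and le_mup: "le y (mup le sle x y)"
  and mup_least: "sle x w \<Longrightarrow> le y w \<Longrightarrow> le (mup le sle x y) w"
  using is_least_mup[of x y] unfolding is_least_wrt_def by auto

lemma mlow_sle: "sle (mlow le sle x y) x"
  and mlow_le: "le (mlow le sle x y) y"
  and mlow_greatest: "sle w x \<Longrightarrow> le w y \<Longrightarrow> le w (mlow le sle x y)"
  using is_greatest_mlow[of x y] unfolding is_greatest_wrt_def by auto

lemma mup_zero: "mup le sle 0 0 = 0"
  using le_mup[of 0 0] mup_least[of 0 0 0] ordered_vs_refl[OF sle_ordered]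
    ordered_vs_refl[OF le_ordered] ordered_vs_antisym[OF le_ordered] by metis

lemma mlow_zero: "mlow le sle 0 0 = 0"
  using mlow_le[of 0 0] mlow_greatest[of 0 0 0] ordered_vs_refl[OF sle_ordered]
    ordered_vs_refl[OF le_ordered] ordered_vs_antisym[OF le_ordered] by metis

lemma mabs_nonneg: "sle 0 (mabs le sle x)"
  unfolding mabs_def using ordered_vs_add_nonneg[OF sle_ordered] sle_mup by blast

lemma le_mabs: "le x (mabs le sle x)"
proof -
  have "le x (x + mup le sle 0 (- x))"
    using ordered_vs_add_left[OF le_ordered sle_imp_le[OF sle_mup[of 0 "- x"]], of x] by simp
  also have "le \<dots> (mup le sle 0 x + mup le sle 0 (- x))"
    by (rule ordered_vs_add_right[OF le_ordered le_mup])
  finally show ?thesis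
    unfolding mabs_def .
qed

lemma neg_mabs_sle_zero: "sle (- mabs le sle x) 0"
  using ordered_vs_uminus[OF sle_ordered mabs_nonneg] by simp

lemma nonneg_sle_in_MS1: "sle 0 z \<Longrightarrow> le z (mabs le sle x) \<Longrightarrow> z \<in> MS1 le sle {x}"
  unfolding MS1_def using neg_mabs_sle_zero sle_ordered_trans by blast

lemma nonneg_le_in_MS1: "sle 0 x \<Longrightarrow> le x y \<Longrightarrow> x \<in> MS1 le sle {y}"
  using nonneg_sle_in_MS1 le_ordered_trans le_mabs by blast

lemma mup_diff_in_MS1: "mup le sle x y - x \<in> MS1 le sle {y - x}"
proof (rule nonneg_sle_in_MS1)
  show "sle 0 (mup le sle x y - x)"
    using ordered_vs_diff_nonneg_iff[OF sle_ordered] sle_mup by blast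
  let ?s = "mabs le sle (y - x)"
  have "le (mup le sle x y) (x + ?s)"
  proof (rule mup_least)
    show "sle x (x + ?s)"
      using ordered_vs_add_left[OF sle_ordered mabs_nonneg, of x] by simp
    show "le y (x + ?s)"
      using ordered_vs_add_left[OF le_ordered le_mabs, of x "y - x"] by simp
  qed
  then show "le (mup le sle x y - x) ?s"
    using ordered_vs_add_right[OF le_ordered, of _ _ "- x"] by fastforce
qed

lemma diff_mlow_in_MS1: "x - mlow le sle x y \<in> MS1 le sle {x - y}"
proof (rule nonneg_sle_in_MS1)
  show "sle 0 (x - mlow le sle x y)"
    using ordered_vs_diff_nonneg_iff[OF sle_ordered] mlow_sle by blast
  let ?s = "mabs le sle (x - y)"
  have "le (x - ?s) (mlow le sle x y)"
  proof (rule mlow_greatest)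
    show "sle (x - ?s) x"
      using ordered_vs_add_left[OF sle_ordered neg_mabs_sle_zero, of x] by simp
    show "le (x - ?s) y"
      using ordered_vs_add_left[OF le_ordered ordered_vs_uminus[OF le_ordered le_mabs[of "x - y"]], of x]
      by simp
  qed
  then show "le (x - mlow le sle x y) ?s"
    using ordered_vs_add_right[OF le_ordered, of _ _ "?s - mlow le sle x y"] by fastforce
qed

lemma MS1_shift_mabs:
  assumes "y \<in> MS1 le sle {x}"
  shows "sle 0 (y + mabs le sle x)" and "le (y + mabs le sle x) (mabs le sle x + mabs le sle x)"
  using assms ordered_vs_add_right[OF sle_ordered, of "- mabs le sle x" y "mabs le sle x"]
    ordered_vs_add_right[OF le_ordered, of y "mabs le sle x" "mabs le sle x"]
  unfolding MS1_def by auto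

lemma MS2_eq_uminus_MS1: "MS2 le sle W = uminus ` MS1 le sle W"
proof -
  have "y \<in> MS2 le sle W \<longleftrightarrow> - y \<in> MS1 le sle W" for y
  proof -
    have "le (- s) y \<and> sle y s \<longleftrightarrow> sle (- s) (- y) \<and> le (- y) s" for s
      using ordered_vs_uminus[OF le_ordered, of "- s" y] ordered_vs_uminus[OF le_ordered, of "- y" s]
        ordered_vs_uminus[OF sle_ordered, of y s] ordered_vs_uminus[OF sle_ordered, of "- s" "- y"]
      by auto
    then show ?thesis
      unfolding MS1_def MS2_def by simp
  qed
  then show ?thesis
    using image_iff by fastforce
qed

end

section \<open>Mixed lattice operations and the vector topology\<close>

locale mixed_lattice_tvs = mixed_lattice le sle
  for le sle :: "'a::real_vector \<Rightarrow> 'a \<Rightarrow> bool" +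
  fixes T :: "'a topology"
  assumes vector_topology: "vector_topology T"
begin

lemma mabs_continuous_at_zero:
  assumes cont: "mixed_ops_cont_zero le sle T" and U: "nhd0 T U"
  obtains W where "nhd0 T W" "\<And>x. x \<in> W \<Longrightarrow> mabs le sle x \<in> U"
proof -
  obtain V where V: "openin T V" "0 \<in> V" "\<And>a b. a \<in> V \<Longrightarrow> b \<in> V \<Longrightarrow> a + b \<in> U"
    using vector_topology_half_nhd0[OF vector_topology U] by metis
  have "continuous_at_pt (prod_topology T T) T (\<lambda>(x, y). mup le sle x y) (0, 0)"
    using cont unfolding mixed_ops_cont_zero_def by blast
  then obtain B where B: "openin T B" "0 \<in> B" "\<forall>x\<in>B. \<forall>y\<in>B. mup le sle x y \<in> V"
    using V(1,2) unfolding continuous_at_pt_prod_zero_iff[of "mup le sle", OF mup_zero] by blast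
  obtain W where W: "openin T W" "0 \<in> W" "\<And>a. a \<in> W \<Longrightarrow> - a \<in> W" "W \<subseteq> B"
    using vector_topology_half_nhd0[OF vector_topology nhd0_open[OF B(1,2)]] by metis
  have "mabs le sle x \<in> U" if "x \<in> W" for x
  proof -
    have "0 \<in> B" "x \<in> B" "- x \<in> B"
      using that W(3,4) B(2) by auto
    then have "mup le sle 0 x \<in> V" "mup le sle 0 (- x) \<in> V"
      using B(3) by blast+
    then show ?thesis
      unfolding mabs_def by (rule V(3))
  qed
  then show thesis
    using that nhd0_open[OF W(1,2)] by blast
qed

lemma MS1_singleton_small_if_mabs_small:
  assumes full: "locally_mixed_full le sle T" and U: "nhd0 T U"
  obtains V where "nhd0 T V" "\<And>x. mabs le sle x \<in> V \<Longrightarrow> MS1 le sle {x} \<subseteq> U"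
proof -
  obtain V0 where V0: "\<And>a. a \<in> V0 \<Longrightarrow> - a \<in> V0" "\<And>a b. a \<in> V0 \<Longrightarrow> b \<in> V0 \<Longrightarrow> a + b \<in> U"
    "nhd0 T V0"
    using vector_topology_half_nhd0[OF vector_topology U] nhd0_open by metis
  obtain W where W: "nhd0 T W" "W \<subseteq> V0" "\<And>x y. y \<in> W \<Longrightarrow> sle 0 x \<Longrightarrow> le x y \<Longrightarrow> x \<in> W"
    using full V0(3) unfolding locally_mixed_full_def by metis
  obtain V where V: "nhd0 T V" "\<And>a b. a \<in> V \<Longrightarrow> b \<in> V \<Longrightarrow> a + b \<in> W" "V \<subseteq> W"
    using vector_topology_half_nhd0[OF vector_topology W(1)] nhd0_open by metis
  have "y \<in> U" if s: "mabs le sle x \<in> V" and y: "y \<in> MS1 le sle {x}" for x y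
  proof -
    let ?s = "mabs le sle x"
    have "y + ?s \<in> W"
      using W(3)[OF V(2)[OF s s]] MS1_shift_mabs[OF y] by blast
    moreover have "- ?s \<in> V0"
      using s V(3) W(2) V0(1) by blast
    ultimately have "(y + ?s) + - ?s \<in> U"
      using W(2) V0(2) by blast
    then show ?thesis
      by simp
  qed
  then show thesis
    using that V(1) by blast
qed

lemma MS1_small_if_locally_mixed_full_cont:
  assumes "locally_mixed_full le sle T" and "mixed_ops_cont_zero le sle T"
  shows "nhd0_image_small T (MS1 le sle)"
  unfolding nhd0_image_small_def
proof (intro allI impI)
  fix U assume U: "nhd0 T U"
  obtain V where V: "nhd0 T V" "\<And>x. mabs le sle x \<in> V \<Longrightarrow> MS1 le sle {x} \<subseteq> U"
    using MS1_singleton_small_if_mabs_small[OF assms(1) U] by metis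
  obtain W where W: "nhd0 T W" "\<And>x. x \<in> W \<Longrightarrow> mabs le sle x \<in> V"
    using mabs_continuous_at_zero[OF assms(2) V(1)] by metis
  have "MS1 le sle (W \<inter> U) \<subseteq> U"
    using V(2) W(2) by (auto simp: MS1_UN[of le sle "W \<inter> U"])
  then show "\<exists>W. nhd0 T W \<and> W \<subseteq> U \<and> MS1 le sle W \<subseteq> U"
    using nhd0_Int[OF W(1) U] by blast
qed

lemma locally_mixed_full_if_MS1_small:
  assumes small: "nhd0_image_small T (MS1 le sle)"
  shows "locally_mixed_full le sle T"
  unfolding locally_mixed_full_def
proof (intro allI impI)
  fix U assume "nhd0 T U"
  then obtain W where W: "nhd0 T W" "W \<subseteq> U" "MS1 le sle W \<subseteq> U"
    using small unfolding nhd0_image_small_def by blast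
  define W' where "W' = W \<union> {x. \<exists>y\<in>W. sle 0 x \<and> le x y}"
  have "nhd0 T W'"
    using nhd0_mono[OF W(1)] by (simp add: W'_def)
  moreover have "W' \<subseteq> U"
  proof
    fix x assume "x \<in> W'"
    then consider "x \<in> W" | y where "y \<in> W" "sle 0 x" "le x y"
      unfolding W'_def by blast
    then show "x \<in> U"
    proof cases
      case 2
      then have "x \<in> MS1 le sle {y}"
        by (intro nonneg_le_in_MS1)
      then show ?thesis
        using W(3) \<open>y \<in> W\<close> unfolding MS1_UN[of le sle W] by blast
    qed (use W(2) in blast)
  qed
  moreover have "x \<in> W'" if "y \<in> W'" "sle 0 x" "le x y" for x y
  proof -
    obtain y' where "y' \<in> W" "le y y'"
      using \<open>y \<in> W'\<close> ordered_vs_refl[OF le_ordered, of y] unfolding W'_def by blast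
    moreover have "le x y'"
      using that(3) \<open>le y y'\<close> by (rule le_ordered_trans)
    ultimately show ?thesis
      using that(2) unfolding W'_def by blast
  qed
  ultimately show "\<exists>W. nhd0 T W \<and> W \<subseteq> U \<and> (\<forall>x y. y \<in> W \<and> sle 0 x \<and> le x y \<longrightarrow> x \<in> W)"
    by blast
qed

lemma mixed_ops_cont_zero_if_MS1_small:
  assumes small: "nhd0_image_small T (MS1 le sle)"
  shows "mixed_ops_cont_zero le sle T"
proof -
  have "\<exists>V. openin T V \<and> 0 \<in> V \<and> (\<forall>x\<in>V. \<forall>y\<in>V. mup le sle x y \<in> U \<and> mlow le sle x y \<in> U)"
    if U: "openin T U" "0 \<in> U" for U
  proof -
    obtain V1 where V1: "\<And>a. a \<in> V1 \<Longrightarrow> - a \<in> V1" "\<And>a b. a \<in> V1 \<Longrightarrow> b \<in> V1 \<Longrightarrow> a + b \<in> U"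
      "nhd0 T V1"
      using vector_topology_half_nhd0[OF vector_topology nhd0_open[OF U]] nhd0_open by metis
    obtain W where W: "nhd0 T W" "W \<subseteq> V1" "MS1 le sle W \<subseteq> V1"
      using small V1(3) unfolding nhd0_image_small_def by blast
    obtain V where V: "openin T V" "0 \<in> V" "\<And>a. a \<in> V \<Longrightarrow> - a \<in> V"
      "\<And>a b. a \<in> V \<Longrightarrow> b \<in> V \<Longrightarrow> a + b \<in> W" "V \<subseteq> W"
      using vector_topology_half_nhd0[OF vector_topology W(1)] by metis
    have "mup le sle x y \<in> U \<and> mlow le sle x y \<in> U" if x: "x \<in> V" and y: "y \<in> V" for x y
    proof
      have "x \<in> V1"
        using x V(5) W(2) by blast
      moreover have "y - x \<in> W" and "x - y \<in> W"
        using V(3,4) x y by (metis diff_conv_add_uminus)+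
      then have "mup le sle x y - x \<in> V1" and "- (x - mlow le sle x y) \<in> V1"
        using mup_diff_in_MS1[of x y] diff_mlow_in_MS1[of x y] W(3) V1(1)
        unfolding MS1_UN[of le sle W] by blast+
      ultimately have "x + (mup le sle x y - x) \<in> U" and "x + - (x - mlow le sle x y) \<in> U"
        using V1(2) by blast+
      then show "mup le sle x y \<in> U" and "mlow le sle x y \<in> U"
        by simp_all
    qed
    then show ?thesis
      using V(1,2) by blast
  qed
  then show ?thesis
    unfolding mixed_ops_cont_zero_def
      continuous_at_pt_prod_zero_iff[of "mup le sle", OF mup_zero]
      continuous_at_pt_prod_zero_iff[of "mlow le sle", OF mlow_zero]
    by meson
qed

end

theorem theorem3p15:
  fixes le sle :: "'a::real_vector \<Rightarrow> 'a \<Rightarrow> bool" and T :: "'a topology"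
  assumes "mixed_lattice_vs le sle"
    and "generating_sp sle"
    and "vector_topology T"
  shows "((locally_mixed_full le sle T \<and> mixed_ops_cont_zero le sle T)
           \<longleftrightarrow> (\<forall>U. nhd0 T U \<longrightarrow> (\<exists>W. nhd0 T W \<and> W \<subseteq> U \<and> MS1 le sle W \<subseteq> U)))
       \<and> ((\<forall>U. nhd0 T U \<longrightarrow> (\<exists>W. nhd0 T W \<and> W \<subseteq> U \<and> MS1 le sle W \<subseteq> U))
           \<longleftrightarrow> (\<forall>U. nhd0 T U \<longrightarrow> (\<exists>W. nhd0 T W \<and> W \<subseteq> U \<and> MS2 le sle W \<subseteq> U)))"
proof -
  interpret mixed_lattice_tvs le sle T
    using assms(1,3) by unfold_locales
  have a_iff_b: "locally_mixed_full le sle T \<and> mixed_ops_cont_zero le sle T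
      \<longleftrightarrow> nhd0_image_small T (MS1 le sle)"
    using MS1_small_if_locally_mixed_full_cont locally_mixed_full_if_MS1_small
      mixed_ops_cont_zero_if_MS1_small by blast
  have "MS1 le sle W = uminus ` MS2 le sle W" for W
    by (simp add: MS2_eq_uminus_MS1 image_image)
  then have b_iff_c: "nhd0_image_small T (MS1 le sle) \<longleftrightarrow> nhd0_image_small T (MS2 le sle)"
    using nhd0_image_small_uminus[OF assms(3)] MS2_eq_uminus_MS1 by (metis order_refl)
  from a_iff_b b_iff_c show ?thesis
    unfolding nhd0_image_small_def by blast
qed

end
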